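(* Let $M$ be a fixed positive integer and let $A\in[0,1]$ be a random variable. Suppose there is a constant $\delta\ge0$ such that $\mathbb P(A\le\alpha)\le\alpha+\delta$ for every $\alpha\in(0,1)$. Let $B$ be a random variable such that, conditional on $A$, $B\sim\mathrm{Binom}(M,A)$, and let $R=\frac{1+B}{1+M}$. Then $\mathbb P(R\le\alpha)\le\alpha+\delta$ for every $\alpha\in(0,1)$. *)

theory Defs
  imports "HOL-Probability.Probability"
begin

end

theory Submission
  imports Defs
begin

text \<open>
  Given \<open>A = a\<close>, the event \<open>B \<le> k\<close> has probability \<open>F(a) = \<integral>\<^sub>a\<^sup>1 \<beta>(p) dp\<close>, where
  \<open>\<beta>\<close> is the Beta(k+1, M-k) density. Swapping the integrals,
  \<open>\<P>(B \<le> k) = \<integral>\<^sub>0\<^sup>1 \<beta>(p) \<P>(A \<le> p) dp \<le> \<integral>\<^sub>0\<^sup>1 (p + \<delta>) \<beta>(p) dp = (k+1)/(M+1) + \<delta>\<close>.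
  Since \<open>R \<le> \<alpha>\<close> is the event \<open>B \<le> k\<close> for the largest \<open>k\<close> with \<open>(k+1)/(M+1) \<le> \<alpha>\<close>
  (or is empty), the claim follows.
\<close>

definition binomial_cdf :: "nat \<Rightarrow> nat \<Rightarrow> real \<Rightarrow> real" where
  "binomial_cdf n k p = (\<Sum>j\<le>k. real (n choose j) * p ^ j * (1 - p) ^ (n - j))"

definition beta_density :: "nat \<Rightarrow> nat \<Rightarrow> real \<Rightarrow> real" where
  "beta_density n k p = real (Suc n) * real (n choose k) * p ^ k * (1 - p) ^ (n - k)"

lemma binomial_cdf_eq_prob:
  assumes "p \<in> {0..1}"
  shows "binomial_cdf n k p = measure_pmf.prob (binomial_pmf n p) {..k}"
  using assms by (simp add: binomial_cdf_def measure_measure_pmf_finite)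

lemma binomial_cdf_at_0 [simp]: "binomial_cdf n k 0 = 1"
  by (simp add: binomial_cdf_def sum.atMost_shift)

lemma binomial_cdf_at_1: "k < n \<Longrightarrow> binomial_cdf n k 1 = 0"
  unfolding binomial_cdf_def by (intro sum.neutral) auto

lemma binomial_cdf_nonneg: "p \<in> {0..1} \<Longrightarrow> 0 \<le> binomial_cdf n k p"
  by (simp add: binomial_cdf_eq_prob)

lemma binomial_cdf_le_1: "p \<in> {0..1} \<Longrightarrow> binomial_cdf n k p \<le> 1"
  by (simp add: binomial_cdf_eq_prob)

lemma beta_density_nonneg: "p \<in> {0..1} \<Longrightarrow> 0 \<le> beta_density n k p"
  by (simp add: beta_density_def)

lemma borel_measurable_binomial_cdf [measurable]: "binomial_cdf n k \<in> borel_measurable borel"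
  unfolding binomial_cdf_def[abs_def] by measurable

lemma borel_measurable_beta_density [measurable]: "beta_density n k \<in> borel_measurable borel"
  unfolding beta_density_def[abs_def] by measurable

lemma binomial_cdf_has_derivative:
  assumes "k \<le> n"
  shows "(binomial_cdf (Suc n) k has_real_derivative - beta_density n k p) (at p)"
  using assms
proof (induction k)
  case 0
  have "((\<lambda>p. (1 - p) ^ Suc n) has_real_derivative - beta_density n 0 p) (at p)"
    by (rule derivative_eq_intros refl | simp)+ (simp add: beta_density_def)
  then show ?case
    by (simp add: binomial_cdf_def[abs_def])
next
  case (Suc k)
  then obtain m where m: "n - k = Suc m"
    by (metis Suc_diff_Suc Suc_le_lessD)
  define c where "c = real (Suc n choose Suc k)"
  have step: "binomial_cdf (Suc n) (Suc k) = (\<lambda>p. binomial_cdf (Suc n) k p + c * (p ^ Suc k * (1 - p) ^ Suc m))"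
    using m by (auto simp: binomial_cdf_def c_def fun_eq_iff mult.assoc)
  have deriv: "((\<lambda>p. binomial_cdf (Suc n) k p + c * (p ^ Suc k * (1 - p) ^ Suc m)) has_real_derivative
      - beta_density n k p + c * (real (Suc k) * p ^ k * (1 - p) ^ Suc m + - (real (Suc m) * (1 - p) ^ m) * p ^ Suc k)) (at p)"
  proof -
    have "((\<lambda>p. p ^ Suc k) has_real_derivative real (Suc k) * p ^ k) (at p)"
      using DERIV_pow[of "Suc k" p] by simp
    moreover have "((\<lambda>p. (1 - p) ^ Suc m) has_real_derivative - (real (Suc m) * (1 - p) ^ m)) (at p)"
      by (rule derivative_eq_intros refl | simp)+
    ultimately show ?thesis
      using Suc by (intro DERIV_add DERIV_cmult DERIV_mult) auto
  qed
  have low: "c * (real (Suc k) * p ^ k * (1 - p) ^ Suc m) = beta_density n k p"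
  proof -
    have "c * real (Suc k) = real (Suc n) * real (n choose k)"
      unfolding c_def using Suc_times_binomial_eq[of n k] by (metis of_nat_mult)
    then show ?thesis
      unfolding beta_density_def m by (simp only: mult.assoc[symmetric])
  qed
  have high: "c * (real (Suc m) * (1 - p) ^ m * p ^ Suc k) = beta_density n (Suc k) p"
  proof -
    have "(Suc n - Suc k) * (Suc n choose Suc k) = Suc n * (n choose Suc k)"
      using binomial_absorb_comp[of "Suc n" "Suc k"] by simp
    then have cm: "c * real (Suc m) = real (Suc n) * real (n choose Suc k)"
      unfolding c_def using m by (metis diff_Suc_Suc mult.commute of_nat_mult)
    have "c * (real (Suc m) * (1 - p) ^ m * p ^ Suc k) = (c * real (Suc m)) * p ^ Suc k * (1 - p) ^ m"
      by (simp only: mult_ac)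
    also have "\<dots> = beta_density n (Suc k) p"
    proof -
      have "n - Suc k = m"
        using m by arith
      then show ?thesis
        unfolding beta_density_def cm by (simp only:)
    qed
    finally show ?thesis .
  qed
  show ?case
    using deriv unfolding step distrib_left mult_minus_left mult_minus_right low high by simp
qed

lemma beta_density_has_integral_tail:
  assumes "k \<le> n" "a \<le> 1"
  shows "(beta_density n k has_integral binomial_cdf (Suc n) k a) {a..1}"
proof -
  have "((\<lambda>p. - binomial_cdf (Suc n) k p) has_vector_derivative beta_density n k p) (at p within {a..1})" for p
    using DERIV_minus[OF binomial_cdf_has_derivative[OF assms(1)]]
    by (simp add: has_real_derivative_iff_has_vector_derivative has_vector_derivative_at_within)
  from fundamental_theorem_of_calculus[OF assms(2) this]
  show ?thesis
    using assms(1) by (simp add: binomial_cdf_at_1)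
qed

lemma beta_density_has_integral:
  "k \<le> n \<Longrightarrow> (beta_density n k has_integral 1) {0..1}"
  using beta_density_has_integral_tail[of k n 0] by simp

lemma beta_density_mean:
  assumes "k \<le> n"
  shows "((\<lambda>p. p * beta_density n k p) has_integral (real k + 1) / (real n + 2)) {0..1}"
proof -
  have "p * beta_density n k p = (real k + 1) / (real n + 2) * beta_density (Suc n) (Suc k) p" for p
  proof -
    have "p * beta_density n k p = (real (Suc n) * real (n choose k)) * (p ^ Suc k * (1 - p) ^ (n - k))"
      unfolding beta_density_def by (simp del: binomial_Suc_Suc of_nat_Suc add: mult_ac)
    also have "\<dots> = (real (Suc n choose Suc k) * real (Suc k)) * (p ^ Suc k * (1 - p) ^ (n - k))"
      using Suc_times_binomial_eq[of n k] by (metis of_nat_mult)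
    also have "\<dots> = (real k + 1) / (real n + 2) * beta_density (Suc n) (Suc k) p"
      unfolding beta_density_def by (simp del: binomial_Suc_Suc add: field_simps)
    finally show ?thesis .
  qed
  then show ?thesis
    using has_integral_mult_right[OF beta_density_has_integral, of "Suc k" "Suc n" "(real k + 1) / (real n + 2)"]
      assms by simp
qed

lemma nn_integral_has_integral_indicator:
  fixes f :: "real \<Rightarrow> real"
  assumes "(f has_integral I) S" "S \<in> sets borel" "f \<in> borel_measurable borel"
    and "\<And>x. x \<in> S \<Longrightarrow> 0 \<le> f x"
  shows "(\<integral>\<^sup>+x\<in>S. ennreal (f x) \<partial>lborel) = ennreal I"
proof -
  have "(\<integral>\<^sup>+x. ennreal (f x * indicator S x) \<partial>lborel) = ennreal I"
  proof (rule nn_integral_has_integral_lborel)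
    show "((\<lambda>x. f x * indicator S x) has_integral I) UNIV"
      using assms(1) by (simp add: indicator_times_eq_if has_integral_restrict_UNIV)
  qed (use assms in \<open>auto simp: indicator_def\<close>)
  moreover have "ennreal (f x * indicator S x) = ennreal (f x) * indicator S x" for x
    by (simp add: indicator_def)
  ultimately show ?thesis
    by simp
qed

lemma nn_integral_interval_swap:
  fixes A :: "'a \<Rightarrow> real" and g :: "real \<Rightarrow> ennreal"
  assumes "sigma_finite_measure P"
    and [measurable]: "A \<in> borel_measurable P" "g \<in> borel_measurable borel"
  shows "(\<integral>\<^sup>+\<omega>. (\<integral>\<^sup>+p\<in>{A \<omega>..b}. g p \<partial>lborel) \<partial>P)
    = (\<integral>\<^sup>+p. g p * indicator {..b} p * emeasure P {\<omega> \<in> space P. A \<omega> \<le> p} \<partial>lborel)"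
proof -
  interpret pair_sigma_finite P lborel
    by (simp add: pair_sigma_finite_def assms(1) lborel.sigma_finite_measure_axioms)
  define h where "h \<omega> p = g p * indicator {..b} p * indicator {\<omega> \<in> space P. A \<omega> \<le> p} \<omega>" for \<omega> p
  have "(\<integral>\<^sup>+\<omega>. (\<integral>\<^sup>+p\<in>{A \<omega>..b}. g p \<partial>lborel) \<partial>P) = (\<integral>\<^sup>+\<omega>. (\<integral>\<^sup>+p. h \<omega> p \<partial>lborel) \<partial>P)"
    by (intro nn_integral_cong) (auto simp: h_def indicator_def)
  also have "\<dots> = (\<integral>\<^sup>+p. (\<integral>\<^sup>+\<omega>. h \<omega> p \<partial>P) \<partial>lborel)"
    by (rule Fubini'[symmetric]) (simp add: h_def[abs_def])
  also have "\<dots> = (\<integral>\<^sup>+p. g p * indicator {..b} p * emeasure P {\<omega> \<in> space P. A \<omega> \<le> p} \<partial>lborel)"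
    unfolding h_def by (intro nn_integral_cong nn_integral_cmult_indicator) measurable
  finally show ?thesis .
qed

lemma integrable_comp_bounded_on_unit_interval:
  fixes f :: "real \<Rightarrow> real"
  assumes "finite_measure P" "A \<in> borel_measurable P" "f \<in> borel_measurable borel"
    and "\<And>\<omega>. \<omega> \<in> space P \<Longrightarrow> A \<omega> \<in> {0..1}" "\<And>p. p \<in> {0..1} \<Longrightarrow> \<bar>f p\<bar> \<le> C"
  shows "integrable P (\<lambda>\<omega>. f (A \<omega>))"
  using assms by (intro finite_measure.integrable_const_bound[where B = C] AE_I2) auto

lemma prob_le_eq_expectation_binomial_cdf:
  fixes P :: "'a measure" and A :: "'a \<Rightarrow> real" and B :: "'a \<Rightarrow> nat"
  assumes "prob_space P"
    and A_rv[measurable]: "A \<in> borel_measurable P"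
    and B_rv[measurable]: "B \<in> measurable P (count_space UNIV)"
    and A_range: "\<And>\<omega>. \<omega> \<in> space P \<Longrightarrow> A \<omega> \<in> {0..1}"
    and B_law: "\<And>j. measure P {\<omega> \<in> space P. B \<omega> = j} = (\<integral>\<omega>. pmf (binomial_pmf M (A \<omega>)) j \<partial>P)"
  shows "measure P {\<omega> \<in> space P. B \<omega> \<le> k} = (\<integral>\<omega>. binomial_cdf M k (A \<omega>) \<partial>P)"
proof -
  interpret prob_space P by fact
  define t where "t j p = real (M choose j) * p ^ j * (1 - p) ^ (M - j)" for j p
  have pmf_eq: "pmf (binomial_pmf M (A \<omega>)) j = t j (A \<omega>)" if "\<omega> \<in> space P" for \<omega> j
    using A_range[OF that] by (simp add: t_def)
  have int_t: "integrable P (\<lambda>\<omega>. t j (A \<omega>))" for j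
  proof (rule integrable_comp_bounded_on_unit_interval[where f = "t j"])
    show "\<bar>t j p\<bar> \<le> 1" if "p \<in> {0..1}" for p
      using that pmf_le_1[of "binomial_pmf M p" j] by (simp add: t_def)
  qed (use A_range in \<open>auto simp: t_def[abs_def] finite_measure_axioms\<close>)
  have "measure P {\<omega> \<in> space P. B \<omega> \<le> k} = measure P (\<Union>j\<le>k. {\<omega> \<in> space P. B \<omega> = j})"
    by (rule arg_cong[where f = "measure P"]) auto
  also have "\<dots> = (\<Sum>j\<le>k. measure P {\<omega> \<in> space P. B \<omega> = j})"
    by (rule finite_measure_finite_Union) (auto simp: disjoint_family_on_def)
  also have "\<dots> = (\<Sum>j\<le>k. \<integral>\<omega>. t j (A \<omega>) \<partial>P)"
    unfolding B_law by (intro sum.cong refl Bochner_Integration.integral_cong) (simp_all add: pmf_eq)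
  also have "\<dots> = (\<integral>\<omega>. (\<Sum>j\<le>k. t j (A \<omega>)) \<partial>P)"
    by (rule Bochner_Integration.integral_sum[symmetric]) (rule int_t)
  also have "\<dots> = (\<integral>\<omega>. binomial_cdf M k (A \<omega>) \<partial>P)"
    by (simp add: t_def binomial_cdf_def)
  finally show ?thesis .
qed

lemma expectation_binomial_cdf_le:
  fixes P :: "'a measure" and A :: "'a \<Rightarrow> real"
  assumes "prob_space P" "\<delta> \<ge> 0" "k \<le> n"
    and A_rv[measurable]: "A \<in> borel_measurable P"
    and A_range: "\<And>\<omega>. \<omega> \<in> space P \<Longrightarrow> A \<omega> \<in> {0..1}"
    and A_hyp: "\<And>\<alpha>. \<alpha> \<in> {0<..<1} \<Longrightarrow> measure P {\<omega> \<in> space P. A \<omega> \<le> \<alpha>} \<le> \<alpha> + \<delta>"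
  shows "(\<integral>\<omega>. binomial_cdf (Suc n) k (A \<omega>) \<partial>P) \<le> (real k + 1) / (real n + 2) + \<delta>"
proof -
  interpret prob_space P by fact
  let ?\<beta> = "beta_density n k"
  have tail: "ennreal (binomial_cdf (Suc n) k a) = (\<integral>\<^sup>+p\<in>{a..1}. ennreal (?\<beta> p) \<partial>lborel)"
    if "a \<in> {0..1}" for a
    using that by (intro nn_integral_has_integral_indicator[symmetric] beta_density_has_integral_tail
        assms(3)) (auto intro: beta_density_nonneg)
  have bound: "AE p in lborel. ennreal (?\<beta> p) * indicator {..1} p * emeasure P {\<omega> \<in> space P. A \<omega> \<le> p}
      \<le> ennreal ((p + \<delta>) * ?\<beta> p) * indicator {0..1} p"
    using AE_lborel_singleton[of 0] AE_lborel_singleton[of 1]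
  proof eventually_elim
    case (elim p)
    consider "p < 0" | "0 < p \<and> p < 1" | "1 < p"
      using elim by linarith
    then show ?case
    proof cases
      case 1
      then have "{\<omega> \<in> space P. A \<omega> \<le> p} = {}"
        using A_range by force
      then show ?thesis
        by (simp only: emeasure_empty) simp
    next
      case 2
      then have "emeasure P {\<omega> \<in> space P. A \<omega> \<le> p} \<le> ennreal (p + \<delta>)"
        using A_hyp[of p] by (simp add: emeasure_eq_measure ennreal_leI)
      then have "ennreal (?\<beta> p) * emeasure P {\<omega> \<in> space P. A \<omega> \<le> p} \<le> ennreal (?\<beta> p) * ennreal (p + \<delta>)"
        by (rule mult_left_mono) simp
      also have "\<dots> = ennreal ((p + \<delta>) * ?\<beta> p)"
        using 2 assms(2) beta_density_nonneg[of p n k]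
        by (subst ennreal_mult[symmetric]) (simp_all add: mult.commute)
      finally show ?thesis
        using 2 by simp
    qed simp
  qed
  have "ennreal (\<integral>\<omega>. binomial_cdf (Suc n) k (A \<omega>) \<partial>P)
      = (\<integral>\<^sup>+\<omega>. ennreal (binomial_cdf (Suc n) k (A \<omega>)) \<partial>P)"
    by (intro nn_integral_eq_integral[symmetric] integrable_comp_bounded_on_unit_interval[where C = 1])
      (auto intro!: AE_I2 binomial_cdf_nonneg binomial_cdf_le_1 A_range simp: finite_measure_axioms)
  also have "\<dots> = (\<integral>\<^sup>+\<omega>. (\<integral>\<^sup>+p\<in>{A \<omega>..1}. ennreal (?\<beta> p) \<partial>lborel) \<partial>P)"
    by (intro nn_integral_cong tail A_range)
  also have "\<dots> = (\<integral>\<^sup>+p. ennreal (?\<beta> p) * indicator {..1} p * emeasure P {\<omega> \<in> space P. A \<omega> \<le> p} \<partial>lborel)"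
    by (intro nn_integral_interval_swap) (auto simp: sigma_finite_measure_axioms)
  also have "\<dots> \<le> (\<integral>\<^sup>+p\<in>{0..1}. ennreal ((p + \<delta>) * ?\<beta> p) \<partial>lborel)"
    by (rule nn_integral_mono_AE[OF bound])
  also have "\<dots> = ennreal ((real k + 1) / (real n + 2) + \<delta>)"
  proof (rule nn_integral_has_integral_indicator)
    show "((\<lambda>p. (p + \<delta>) * ?\<beta> p) has_integral (real k + 1) / (real n + 2) + \<delta>) {0..1}"
      using has_integral_add[OF beta_density_mean has_integral_mult_right[OF beta_density_has_integral]]
        assms(3) by (simp add: distrib_right)
  qed (use assms(2) in \<open>auto intro!: mult_nonneg_nonneg beta_density_nonneg\<close>)
  finally show ?thesis
    using assms(2) by (subst (asm) ennreal_le_iff) auto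
qed

lemma rank_le_cases [consumes 1]:
  fixes \<alpha> :: real
  assumes "\<alpha> < 1"
  obtains (empty) "\<And>b. \<not> (1 + real b) / (1 + real (Suc n)) \<le> \<alpha>"
  | (le) k where "k \<le> n" "(real k + 1) / (real n + 2) \<le> \<alpha>"
      "\<And>b. (1 + real b) / (1 + real (Suc n)) \<le> \<alpha> \<longleftrightarrow> b \<le> k"
proof -
  define L where "L = \<lfloor>\<alpha> * (real n + 2)\<rfloor>"
  have rank_le: "(1 + real b) / (1 + real (Suc n)) \<le> \<alpha> \<longleftrightarrow> int b + 1 \<le> L" for b
    by (simp add: L_def pos_divide_le_eq le_floor_iff add.commute)
  show ?thesis
  proof (cases "L \<ge> 1")
    case False
    then show ?thesis
      using that(1) rank_le by force
  next
    case True
    define k where "k = nat (L - 1)"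
    have L: "L = int k + 1"
      using True by (simp add: k_def)
    have "L < int n + 2"
      using assms by (simp add: L_def floor_less_iff)
    moreover have "real_of_int L \<le> \<alpha> * (real n + 2)"
      unfolding L_def by (rule of_int_floor_le)
    ultimately show ?thesis
      using that(2)[of k] rank_le L by (simp add: pos_divide_le_eq)
  qed
qed

theorem lemmaA1:
  fixes P :: "'a measure" and A :: "'a \<Rightarrow> real" and B :: "'a \<Rightarrow> nat"
    and M :: nat and \<delta> :: real
  assumes "prob_space P"
    and "M > 0"
    and "\<delta> \<ge> 0"
    and A_rv: "A \<in> borel_measurable P"
    and B_rv: "B \<in> measurable P (count_space UNIV)"
    and A_range: "\<And>\<omega>. \<omega> \<in> space P \<Longrightarrow> A \<omega> \<in> {0..1}"
    and A_hyp: "\<And>\<alpha>. \<alpha> \<in> {0<..<1} \<Longrightarrow> measure P {\<omega> \<in> space P. A \<omega> \<le> \<alpha>} \<le> \<alpha> + \<delta>"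
    and B_cond: "\<And>S k. S \<in> sets borel \<Longrightarrow>
        measure P {\<omega> \<in> space P. A \<omega> \<in> S \<and> B \<omega> = k}
          = (\<integral>\<omega>. indicator S (A \<omega>) * pmf (binomial_pmf M (A \<omega>)) k \<partial>P)"
  shows "\<forall>\<alpha> \<in> {0<..<1}.
           measure P {\<omega> \<in> space P. (1 + real (B \<omega>)) / (1 + real M) \<le> \<alpha>} \<le> \<alpha> + \<delta>"
proof
  fix \<alpha> :: real
  assume \<alpha>: "\<alpha> \<in> {0<..<1}"
  obtain n where M: "M = Suc n"
    using \<open>M > 0\<close> gr0_implies_Suc by blast
  have B_law: "measure P {\<omega> \<in> space P. B \<omega> = j} = (\<integral>\<omega>. pmf (binomial_pmf M (A \<omega>)) j \<partial>P)" for j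
    using B_cond[of UNIV j] by simp
  have "\<alpha> < 1"
    using \<alpha> by simp
  then show "measure P {\<omega> \<in> space P. (1 + real (B \<omega>)) / (1 + real M) \<le> \<alpha>} \<le> \<alpha> + \<delta>"
  proof (cases rule: rank_le_cases[where n = n])
    case empty
    then show ?thesis
      using \<alpha> \<open>\<delta> \<ge> 0\<close> M by simp
  next
    case (le k)
    have "measure P {\<omega> \<in> space P. B \<omega> \<le> k} = (\<integral>\<omega>. binomial_cdf (Suc n) k (A \<omega>) \<partial>P)"
      using prob_le_eq_expectation_binomial_cdf assms B_law unfolding M by blast
    also have "\<dots> \<le> (real k + 1) / (real n + 2) + \<delta>"
      using expectation_binomial_cdf_le assms \<open>k \<le> n\<close> by blast
    finally show ?thesis
      using le M by simp
  qed
qed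

end
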